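(* Let $\phi_1,\dots,\phi_n:\mathbb{R}^d\to\mathbb{R}$ be differentiable and let $P(w)=\frac1n\sum_{i=1}^n\phi_i(w)$. Suppose $P$ is $H$-strongly convex and $(1/\gamma)$-smooth, and let $w^*$ be a minimizer of $P$. Run the stratified-sampling minibatch SGD algorithm described in the context with step sizes $\eta_t=1/(a+Ht)$, where $a\ge 1/\gamma-H$. Then for every $T\ge1$, $$\inf_{t\in[T]}\mathbb{E}P(w_{t+1})-P(w^* )\le\frac1T\sum_{t=1}^T\mathbb{E}P(w_{t+1})-P(w^* )\le\frac1T\Big[\frac a2\|w^*\|^2+\mathbb{E}\sum_{t=1}^T\frac{V_t}{a+Ht}\Big],$$ where $V_t$ is the variance of the stochastic gradient $g_t$ defined in the context.
   Context: $\|\cdot\|$ denotes the Euclidean norm and $[T]=\{1,\dots,T\}$. A differentiable $\phi:\mathbb{R}^d\to\mathbb{R}$ is $H$-strongly convex ($H\ge0$) if $\phi(u)\ge\phi(v)+\nabla\phi(v)^\top(u-v)+\frac H2\|u-v\|^2$ for all $u,v$, and $(1/\gamma)$-smooth ($\gamma>0$) if $\phi(u)\le\phi(v)+\nabla\phi(v)^\top(u-v)+\frac1{2\gamma}\|u-v\|^2$ for all $u,v$. Algorithm (SGD with stratified sampling): start with $w_1=0$. At each step $t=1,2,\dots$, a partition of $[n]=\{1,\dots,n\}$ into nonempty disjoint sets $C_1^t,\dots,C_k^t$ with $|C_i^t|=n_i^t$, and positive integers $b_1^t,\dots,b_k^t$, are chosen (possibly depending on the past, but before the step-$t$ sampling).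 Then, independently across $i$ and of the past given these choices, for each $i$ a multiset $B_i^t$ of $b_i^t$ indices is drawn i.i.d. uniformly (with replacement) from $C_i^t$. Set $g_t=\frac1n\sum_{i=1}^k\frac{n_i^t}{b_i^t}\sum_{s\in B_i^t}\nabla\phi_s(w_t)$ and $w_{t+1}=w_t-\eta_t g_t$. The variance is $V_t=\mathbb{E}\big[\|g_t-\nabla P(w_t)\|^2\,\big|\,\text{past}\big]$ (note $\mathbb{E}[g_t\mid\text{past}]=\nabla P(w_t)$). *)

theory Defs
  imports "HOL-Probability.Probability"
begin

definition strongly_convex_grad :: "('a::real_inner \<Rightarrow> real) \<Rightarrow> ('a \<Rightarrow> 'a) \<Rightarrow> real \<Rightarrow> bool" where
  "strongly_convex_grad f f' H \<longleftrightarrow>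
     (\<forall>u v. f u \<ge> f v + f' v \<bullet> (u - v) + H / 2 * (norm (u - v))\<^sup>2)"

definition smooth_grad :: "('a::real_inner \<Rightarrow> real) \<Rightarrow> ('a \<Rightarrow> 'a) \<Rightarrow> real \<Rightarrow> bool" where
  "smooth_grad f f' \<gamma> \<longleftrightarrow>
     (\<forall>u v. f u \<le> f v + f' v \<bullet> (u - v) + 1 / (2 * \<gamma>) * (norm (u - v))\<^sup>2)"

fun iid_pmf :: "nat \<Rightarrow> 'b pmf \<Rightarrow> 'b list pmf" where
  "iid_pmf 0 p = return_pmf []"
| "iid_pmf (Suc k) p = bind_pmf p (\<lambda>x. map_pmf (\<lambda>xs. x # xs) (iid_pmf k p))"

fun seq_pmf :: "'b pmf list \<Rightarrow> 'b list pmf" where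
  "seq_pmf [] = return_pmf []"
| "seq_pmf (p # ps) = bind_pmf p (\<lambda>x. map_pmf (\<lambda>xs. x # xs) (seq_pmf ps))"

text \<open>A history is the list of past step samples, most recent first. A step sample
  is a list (indexed by stratum i) of the lists of drawn indices B_i.
  The strategy C maps a history to the partition C_1..C_k (as a list of sets),
  b maps a history to the batch sizes b_1..b_k.\<close>
type_synonym hist = "nat list list list"

definition valid_strategy :: "nat \<Rightarrow> (hist \<Rightarrow> nat set list) \<Rightarrow> (hist \<Rightarrow> nat list) \<Rightarrow> bool" where
  "valid_strategy n C b \<longleftrightarrow>
     (\<forall>h. length (b h) = length (C h)
        \<and> (\<forall>i < length (C h). C h ! i \<noteq> {} \<and> b h ! i > 0)
        \<and> (\<forall>i < length (C h). \<forall>j < length (C h). i \<noteq> j \<longrightarrow> C h ! i \<inter> C h ! j = {})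
        \<and> (\<Union>i < length (C h). C h ! i) = {1..n})"

definition step_pmf :: "(hist \<Rightarrow> nat set list) \<Rightarrow> (hist \<Rightarrow> nat list) \<Rightarrow> hist \<Rightarrow> nat list list pmf" where
  "step_pmf C b h = seq_pmf (map2 (\<lambda>Ci bi. iid_pmf bi (pmf_of_set Ci)) (C h) (b h))"

fun hist_pmf :: "(hist \<Rightarrow> nat set list) \<Rightarrow> (hist \<Rightarrow> nat list) \<Rightarrow> nat \<Rightarrow> hist pmf" where
  "hist_pmf C b 0 = return_pmf []"
| "hist_pmf C b (Suc t) = bind_pmf (hist_pmf C b t) (\<lambda>h. map_pmf (\<lambda>s. s # h) (step_pmf C b h))"

definition est :: "nat \<Rightarrow> (nat \<Rightarrow> 'a::real_vector \<Rightarrow> 'a) \<Rightarrow> nat set list \<Rightarrow> nat list \<Rightarrow> 'a \<Rightarrow> nat list list \<Rightarrow> 'a" where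
  "est n grad Cs bs x s =
     (1 / real n) *\<^sub>R (\<Sum>i < length Cs. (real (card (Cs ! i)) / real (bs ! i)) *\<^sub>R
                         sum_list (map (\<lambda>j. grad j x) (s ! i)))"

text \<open>Iterate w_{t+1} determined by a history of length t (w_1 = 0).\<close>
fun W :: "nat \<Rightarrow> (nat \<Rightarrow> 'a::real_vector \<Rightarrow> 'a) \<Rightarrow> (nat \<Rightarrow> real) \<Rightarrow> (hist \<Rightarrow> nat set list)
          \<Rightarrow> (hist \<Rightarrow> nat list) \<Rightarrow> hist \<Rightarrow> 'a" where
  "W n grad eta C b [] = 0"
| "W n grad eta C b (s # h) =
     W n grad eta C b h - eta (Suc (length h)) *\<^sub>R est n grad (C h) (b h) (W n grad eta C b h) s"

text \<open>Conditional variance V_t given a history h of length t-1.\<close>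
definition Var_step :: "nat \<Rightarrow> (nat \<Rightarrow> 'a::real_normed_vector \<Rightarrow> 'a) \<Rightarrow> (nat \<Rightarrow> real) \<Rightarrow> (hist \<Rightarrow> nat set list)
          \<Rightarrow> (hist \<Rightarrow> nat list) \<Rightarrow> ('a \<Rightarrow> 'a) \<Rightarrow> hist \<Rightarrow> real" where
  "Var_step n grad eta C b gP h =
     measure_pmf.expectation (step_pmf C b h)
       (\<lambda>s. (norm (est n grad (C h) (b h) (W n grad eta C b h) s - gP (W n grad eta C b h)))\<^sup>2)"

end

theory Submission
  imports Defs
begin

text \<open>With \<open>c\<^sub>t = a + H t = 1 / \<eta>\<^sub>t\<close>, strong convexity at \<open>w\<^sub>t\<close> against \<open>w\<^sup>*\<close>, smoothness along the step and
  unbiasedness of the stratified estimate give, conditionally on the past,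
  \<open>E P(w\<^sub>t\<^sub>+\<^sub>1) - P(w\<^sup>*) \<le> (c\<^sub>t\<^sub>-\<^sub>1 \<parallel>w\<^sub>t - w\<^sup>*\<parallel>\<^sup>2 - c\<^sub>t E \<parallel>w\<^sub>t\<^sub>+\<^sub>1 - w\<^sup>*\<parallel>\<^sup>2) / 2 + V\<^sub>t / c\<^sub>t\<close>;
  the hypothesis on \<open>a\<close> makes \<open>\<eta>\<^sub>t \<le> \<gamma>\<close>, which is what lets smoothness absorb the squared step.
  Since \<open>c\<^sub>t - H = c\<^sub>t\<^sub>-\<^sub>1\<close>, the distance terms telescope after taking full expectations and
  summing over \<open>t\<close>, leaving \<open>c\<^sub>0 \<parallel>w\<^sub>1 - w\<^sup>*\<parallel>\<^sup>2 / 2 = a \<parallel>w\<^sup>*\<parallel>\<^sup>2 / 2\<close>; the minimum is at most the mean.\<close>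

lemma finite_set_pmf_iid_pmf: "finite (set_pmf p) \<Longrightarrow> finite (set_pmf (iid_pmf k p))"
  by (induction k) auto

lemma finite_set_pmf_seq_pmf:
  "(\<And>p. p \<in> set ps \<Longrightarrow> finite (set_pmf p)) \<Longrightarrow> finite (set_pmf (seq_pmf ps))"
  by (induction ps) auto

lemma valid_strategyD:
  assumes "valid_strategy n C b" "i < length (C h)"
  shows "finite (C h ! i)" "C h ! i \<noteq> {}" "b h ! i > 0"
proof -
  have "C h ! i \<subseteq> {1..n}" using assms unfolding valid_strategy_def by blast
  then show "finite (C h ! i)" using finite_subset by blast
qed (use assms in \<open>auto simp: valid_strategy_def\<close>)

lemma valid_strategy_length: "valid_strategy n C b \<Longrightarrow> length (b h) = length (C h)"
  by (simp add: valid_strategy_def)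

lemma finite_set_pmf_step_pmf: "valid_strategy n C b \<Longrightarrow> finite (set_pmf (step_pmf C b h))"
  unfolding step_pmf_def
  by (rule finite_set_pmf_seq_pmf)
     (auto simp: set_zip in_set_conv_nth valid_strategyD intro!: finite_set_pmf_iid_pmf)

lemma finite_set_pmf_hist_pmf: "valid_strategy n C b \<Longrightarrow> finite (set_pmf (hist_pmf C b t))"
  by (induction t) (auto intro: finite_set_pmf_step_pmf)

lemma length_hist_pmf: "h \<in> set_pmf (hist_pmf C b t) \<Longrightarrow> length h = t"
  by (induction t arbitrary: h) auto

lemma map_pmf_drop_hist_pmf:
  "k \<le> t \<Longrightarrow> map_pmf (drop (t - k)) (hist_pmf C b t) = hist_pmf C b k"
proof (induction t arbitrary: k)
  case (Suc t)
  show ?case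
  proof (cases "k = Suc t")
    case False
    then have "k \<le> t" using Suc.prems by simp
    have "map_pmf (drop (Suc t - k)) (hist_pmf C b (Suc t))
        = bind_pmf (hist_pmf C b t) (\<lambda>h. map_pmf (\<lambda>s. drop (Suc t - k) (s # h)) (step_pmf C b h))"
      by (simp add: map_bind_pmf pmf.map_comp o_def)
    also have "\<dots> = map_pmf (drop (t - k)) (hist_pmf C b t)"
      using \<open>k \<le> t\<close> by (simp add: Suc_diff_le map_pmf_def)
    finally show ?thesis using Suc.IH[OF \<open>k \<le> t\<close>] by simp
  qed simp
qed simp

lemma expectation_bind_pmf_finite:
  fixes f :: "_ \<Rightarrow> real"
  assumes "finite (set_pmf p)" "\<And>x. x \<in> set_pmf p \<Longrightarrow> finite (set_pmf (q x))"
  shows "measure_pmf.expectation (bind_pmf p q) f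
       = measure_pmf.expectation p (\<lambda>x. measure_pmf.expectation (q x) f)"
  using assms
  by (simp add: pmf_expectation_bind[of "set_pmf p"] integral_measure_pmf_real[of "set_pmf p"] mult.commute)

lemma expectation_mono_finite:
  fixes f g :: "_ \<Rightarrow> real"
  assumes "finite (set_pmf p)" "\<And>x. x \<in> set_pmf p \<Longrightarrow> f x \<le> g x"
  shows "measure_pmf.expectation p f \<le> measure_pmf.expectation p g"
  using assms by (intro integral_mono_AE integrable_measure_pmf_finite AE_pmfI)

lemma expectation_iid_pmf_sum_list:
  fixes f :: "_ \<Rightarrow> real"
  assumes "finite (set_pmf p)"
  shows "measure_pmf.expectation (iid_pmf k p) (\<lambda>xs. sum_list (map f xs))
       = real k * measure_pmf.expectation p f"
proof (induction k)
  case (Suc k)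
  have "measure_pmf.expectation (iid_pmf (Suc k) p) (\<lambda>xs. sum_list (map f xs))
     = measure_pmf.expectation p
         (\<lambda>x. measure_pmf.expectation (iid_pmf k p) (\<lambda>xs. f x + sum_list (map f xs)))"
    by (simp add: expectation_bind_pmf_finite assms finite_set_pmf_iid_pmf)
  also have "\<dots> = measure_pmf.expectation p (\<lambda>x. f x + real k * measure_pmf.expectation p f)"
    by (simp add: Suc integrable_measure_pmf_finite finite_set_pmf_iid_pmf assms)
  also have "\<dots> = real (Suc k) * measure_pmf.expectation p f"
    by (simp add: integrable_measure_pmf_finite assms algebra_simps)
  finally show ?case .
qed simp

lemma expectation_seq_pmf_sum:
  fixes F :: "nat \<Rightarrow> _ \<Rightarrow> real"
  assumes "\<And>p. p \<in> set ps \<Longrightarrow> finite (set_pmf p)"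
  shows "measure_pmf.expectation (seq_pmf ps) (\<lambda>s. \<Sum>i<length ps. F i (s ! i))
       = (\<Sum>i<length ps. measure_pmf.expectation (ps ! i) (F i))"
  using assms
proof (induction ps arbitrary: F)
  case (Cons p ps)
  have fin: "finite (set_pmf p)" "finite (set_pmf (seq_pmf ps))" "\<And>q. q \<in> set ps \<Longrightarrow> finite (set_pmf q)"
    using Cons.prems by (auto intro!: finite_set_pmf_seq_pmf)
  have "measure_pmf.expectation (seq_pmf (p # ps)) (\<lambda>s. \<Sum>i<length (p # ps). F i (s ! i))
     = measure_pmf.expectation p (\<lambda>x. measure_pmf.expectation (seq_pmf ps)
          (\<lambda>xs. F 0 x + (\<Sum>i<length ps. F (Suc i) (xs ! i))))"
    by (simp del: sum.lessThan_Suc add: sum.lessThan_Suc_shift expectation_bind_pmf_finite fin)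
  also have "\<dots> = measure_pmf.expectation p
                    (\<lambda>x. F 0 x + (\<Sum>i<length ps. measure_pmf.expectation (ps ! i) (F (Suc i))))"
    using Cons.IH[OF fin(3), of "\<lambda>i. F (Suc i)"] by (simp add: integrable_measure_pmf_finite fin)
  also have "\<dots> = (\<Sum>i<length (p # ps). measure_pmf.expectation ((p # ps) ! i) (F i))"
    by (simp add: integrable_measure_pmf_finite fin sum.lessThan_Suc_shift del: sum.lessThan_Suc)
  finally show ?case .
qed simp

lemma inner_sum_list_left: "sum_list (map g xs) \<bullet> v = sum_list (map (\<lambda>j. g j \<bullet> v) xs)"
  by (induction xs) (auto simp: inner_add_left)

lemma expectation_est_inner:
  fixes grad :: "nat \<Rightarrow> 'a::real_inner \<Rightarrow> 'a"
  assumes strategy: "valid_strategy n C b"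
  shows "measure_pmf.expectation (step_pmf C b h) (\<lambda>s. est n grad (C h) (b h) x s \<bullet> v)
       = ((1 / real n) *\<^sub>R (\<Sum>i=1..n. grad i x)) \<bullet> v"
proof -
  define m where "m = length (C h)"
  define f where "f = (\<lambda>j. grad j x \<bullet> v)"
  define ps where "ps = map2 (\<lambda>Ci bi. iid_pmf bi (pmf_of_set Ci)) (C h) (b h)"
  note stratum = valid_strategyD[OF strategy, of _ h, folded m_def]
  have ps: "length ps = m" "\<And>i. i < m \<Longrightarrow> ps ! i = iid_pmf (b h ! i) (pmf_of_set (C h ! i))"
    by (simp_all add: ps_def m_def valid_strategy_length[OF strategy])
  have fin: "finite (set_pmf p)" if "p \<in> set ps" for p
    using that by (auto simp: in_set_conv_nth ps stratum intro!: finite_set_pmf_iid_pmf)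
  have stratum_mean:
    "measure_pmf.expectation (ps ! i) (\<lambda>xs. sum_list (map f xs))
     = real (b h ! i) * (sum f (C h ! i) / real (card (C h ! i)))" if "i < m" for i
    using stratum[OF that] that by (simp add: ps expectation_iid_pmf_sum_list integral_pmf_of_set)
  have "measure_pmf.expectation (step_pmf C b h) (\<lambda>s. est n grad (C h) (b h) x s \<bullet> v)
     = measure_pmf.expectation (seq_pmf ps)
         (\<lambda>s. \<Sum>i<length ps. 1 / real n * (real (card (C h ! i)) / real (b h ! i)) * sum_list (map f (s ! i)))"
    by (simp add: step_pmf_def ps_def[symmetric] est_def ps(1) m_def inner_sum_left
        inner_sum_list_left f_def sum_distrib_left mult.assoc)
  also have "\<dots> = (\<Sum>i<m. 1 / real n * sum f (C h ! i))"
    by (subst expectation_seq_pmf_sum)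
       (auto simp: fin ps(1) stratum_mean stratum card_gt_0_iff intro!: sum.cong)
  also have "\<dots> = 1 / real n * (\<Sum>i<m. sum f (C h ! i))"
    by (simp add: sum_distrib_left)
  also have "(\<Sum>i<m. sum f (C h ! i)) = sum f (\<Union>i<m. C h ! i)"
    using strategy stratum by (subst sum.UNION_disjoint) (auto simp: valid_strategy_def m_def)
  also have "(\<Union>i<m. C h ! i) = {1..n}"
    using strategy by (simp add: valid_strategy_def m_def)
  finally show ?thesis by (simp add: f_def inner_sum_left)
qed

text \<open>The last term has mean zero for an unbiased estimate \<open>g\<close> of \<open>G\<close>; it is chosen so that what
  separates the two sides is exactly the slack \<open>\<eta>/2 (1 - \<eta>/\<gamma>) (\<parallel>G\<parallel>\<^sup>2 + \<parallel>g - G\<parallel>\<^sup>2) \<ge> 0\<close>.\<close>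
lemma sgd_step_pointwise:
  fixes P :: "'a::real_inner \<Rightarrow> real"
  assumes convex: "P wstar \<ge> P w + G \<bullet> (wstar - w) + H / 2 * (norm (wstar - w))\<^sup>2"
    and smooth: "P (w - \<eta> *\<^sub>R g) \<le> P w + G \<bullet> (w - \<eta> *\<^sub>R g - w) + 1 / (2 * \<gamma>) * (norm (w - \<eta> *\<^sub>R g - w))\<^sup>2"
    and \<eta>: "0 < \<eta>" "\<eta> \<le> \<gamma>"
  shows "P (w - \<eta> *\<^sub>R g) - P wstar
     \<le> ((1 / \<eta> - H) * (norm (w - wstar))\<^sup>2 - 1 / \<eta> * (norm (w - \<eta> *\<^sub>R g - wstar))\<^sup>2) / 2
        + \<eta> * (norm (g - G))\<^sup>2 - (g - G) \<bullet> (w - wstar - (\<eta>\<^sup>2 / \<gamma>) *\<^sub>R G)"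
proof -
  define d e where "d = w - wstar" and "e = g - G"
  have w: "w = wstar + d" and g: "g = G + e" by (simp_all add: d_def e_def)
  have descent: "P (w - \<eta> *\<^sub>R g) - P wstar
      \<le> G \<bullet> d - H / 2 * (d \<bullet> d) - \<eta> * (G \<bullet> g) + 1 / (2 * \<gamma>) * (\<eta>\<^sup>2 * (g \<bullet> g))"
  proof -
    have "wstar - w = - d" by (simp add: d_def)
    with convex smooth show ?thesis by (simp add: power2_norm_eq_inner power_mult_distrib)
  qed
  have slack: "0 \<le> \<eta> / 2 * (1 - \<eta> / \<gamma>) * (G \<bullet> G + e \<bullet> e)"
    using \<eta> by (intro mult_nonneg_nonneg) (auto simp: field_simps)
  have "((1 / \<eta> - H) * (norm (w - wstar))\<^sup>2 - 1 / \<eta> * (norm (w - \<eta> *\<^sub>R g - wstar))\<^sup>2) / 2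
        + \<eta> * (norm (g - G))\<^sup>2 - (g - G) \<bullet> (w - wstar - (\<eta>\<^sup>2 / \<gamma>) *\<^sub>R G)
      = G \<bullet> d - H / 2 * (d \<bullet> d) - \<eta> * (G \<bullet> g) + 1 / (2 * \<gamma>) * (\<eta>\<^sup>2 * (g \<bullet> g))
        + \<eta> / 2 * (1 - \<eta> / \<gamma>) * (G \<bullet> G + e \<bullet> e)"
    using \<eta> unfolding w g power2_norm_eq_inner
    by (simp add: inner_add_left inner_add_right inner_diff_left inner_diff_right
        inner_commute field_simps power2_eq_square)
  with descent slack show ?thesis by linarith
qed

lemma sgd_step_expectation:
  fixes P :: "'a::real_inner \<Rightarrow> real" and g :: "'b \<Rightarrow> 'a"
  assumes fin: "finite (set_pmf p)"
    and unbiased: "\<And>v. measure_pmf.expectation p (\<lambda>s. g s \<bullet> v) = G \<bullet> v"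
    and convex: "P wstar \<ge> P w + G \<bullet> (wstar - w) + H / 2 * (norm (wstar - w))\<^sup>2"
    and smooth: "\<And>u. P u \<le> P w + G \<bullet> (u - w) + 1 / (2 * \<gamma>) * (norm (u - w))\<^sup>2"
    and \<eta>: "0 < \<eta>" "\<eta> \<le> \<gamma>"
  shows "measure_pmf.expectation p (\<lambda>s. P (w - \<eta> *\<^sub>R g s)) - P wstar
     \<le> ((1 / \<eta> - H) * (norm (w - wstar))\<^sup>2
          - 1 / \<eta> * measure_pmf.expectation p (\<lambda>s. (norm (w - \<eta> *\<^sub>R g s - wstar))\<^sup>2)) / 2
        + \<eta> * measure_pmf.expectation p (\<lambda>s. (norm (g s - G))\<^sup>2)"
proof -
  define u where "u = w - wstar - (\<eta>\<^sup>2 / \<gamma>) *\<^sub>R G"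
  define c where "c = P wstar + (1 / \<eta> - H) / 2 * (norm (w - wstar))\<^sup>2 + G \<bullet> u"
  have "P (w - \<eta> *\<^sub>R g s)
      \<le> c - 1 / (2 * \<eta>) * (norm (w - \<eta> *\<^sub>R g s - wstar))\<^sup>2 + \<eta> * (norm (g s - G))\<^sup>2 - g s \<bullet> u" for s
    using sgd_step_pointwise[OF convex smooth \<eta>, of "g s"]
    by (simp add: c_def u_def inner_diff_left field_simps)
  then have "measure_pmf.expectation p (\<lambda>s. P (w - \<eta> *\<^sub>R g s))
      \<le> measure_pmf.expectation p (\<lambda>s. c - 1 / (2 * \<eta>) * (norm (w - \<eta> *\<^sub>R g s - wstar))\<^sup>2
                                        + \<eta> * (norm (g s - G))\<^sup>2 - g s \<bullet> u)"
    by (intro expectation_mono_finite fin)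
  also have "\<dots> = c - 1 / (2 * \<eta>) * measure_pmf.expectation p (\<lambda>s. (norm (w - \<eta> *\<^sub>R g s - wstar))\<^sup>2)
                  + \<eta> * measure_pmf.expectation p (\<lambda>s. (norm (g s - G))\<^sup>2) - G \<bullet> u"
    by (simp add: integrable_measure_pmf_finite fin unbiased)
  finally show ?thesis by (simp add: c_def field_simps)
qed

lemma Min_image_le_average:
  fixes f :: "'b \<Rightarrow> real"
  assumes "finite A" "A \<noteq> {}"
  shows "Min (f ` A) \<le> sum f A / real (card A)"
proof -
  have "real (card A) * Min (f ` A) \<le> sum f A"
    using sum_mono[of A "\<lambda>_. Min (f ` A)" f] assms by simp
  then show ?thesis using assms by (simp add: field_simps card_gt_0_iff)
qed

lemma sum_le_telescoping:
  fixes e v c d :: "nat \<Rightarrow> real"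
  assumes step: "\<And>m. m < T \<Longrightarrow> e m \<le> (c m * d m - c (Suc m) * d (Suc m)) / 2 + v m"
    and last: "0 \<le> c T * d T"
  shows "(\<Sum>m<T. e m) \<le> c 0 * d 0 / 2 + (\<Sum>m<T. v m)"
proof -
  have "(\<Sum>m<T. e m) \<le> (\<Sum>m<T. (c m * d m - c (Suc m) * d (Suc m)) / 2 + v m)"
    by (intro sum_mono step) simp
  also have "\<dots> = (c 0 * d 0 - c T * d T) / 2 + (\<Sum>m<T. v m)"
    using sum_lessThan_telescope'[of "\<lambda>m. c m * d m" T]
    by (simp add: sum.distrib sum_divide_distrib[symmetric])
  finally show ?thesis using last by (simp add: diff_divide_distrib)
qed

lemma expectation_hist_pmf_drop:
  fixes f :: "hist \<Rightarrow> real"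
  assumes "k \<le> t"
  shows "measure_pmf.expectation (hist_pmf C b t) (\<lambda>h. f (drop (t - k) h))
       = measure_pmf.expectation (hist_pmf C b k) f"
  using map_pmf_drop_hist_pmf[OF assms, of C b] by (metis integral_map_pmf)

locale stratified_sgd =
  fixes n :: nat and grad :: "nat \<Rightarrow> 'a::real_inner \<Rightarrow> 'a" and P :: "'a \<Rightarrow> real"
    and H \<gamma> a :: real and C :: "hist \<Rightarrow> nat set list" and b :: "hist \<Rightarrow> nat list"
  assumes strongly_convex: "strongly_convex_grad P (\<lambda>w. (1 / real n) *\<^sub>R (\<Sum>i=1..n. grad i w)) H"
    and smooth: "smooth_grad P (\<lambda>w. (1 / real n) *\<^sub>R (\<Sum>i=1..n. grad i w)) \<gamma>"
    and H_nonneg: "H \<ge> 0" and \<gamma>_pos: "\<gamma> > 0" and a_lower: "a \<ge> 1 / \<gamma> - H"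
    and strategy: "valid_strategy n C b"
begin

abbreviation gradP :: "'a \<Rightarrow> 'a" where
  "gradP \<equiv> \<lambda>w. (1 / real n) *\<^sub>R (\<Sum>i=1..n. grad i w)"

abbreviation eta :: "nat \<Rightarrow> real" where
  "eta \<equiv> \<lambda>t. 1 / (a + H * real t)"

abbreviation iterate :: "hist \<Rightarrow> 'a" where
  "iterate \<equiv> W n grad eta C b"

abbreviation expected :: "nat \<Rightarrow> (hist \<Rightarrow> real) \<Rightarrow> real" where
  "expected t f \<equiv> measure_pmf.expectation (hist_pmf C b t) f"

lemma step_size_bounds: "m \<ge> 1 \<Longrightarrow> 0 < eta m \<and> eta m \<le> \<gamma>"
proof -
  assume "m \<ge> 1"
  then have "a + H * real m \<ge> 1 / \<gamma>"
    using a_lower H_nonneg mult_left_mono[of 1 "real m" H] by simp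
  moreover have "1 / \<gamma> > 0" using \<gamma>_pos by simp
  ultimately have "a + H * real m > 0" by linarith
  with \<open>a + H * real m \<ge> 1 / \<gamma>\<close> \<gamma>_pos show ?thesis by (simp add: field_simps)
qed

lemma expected_descent_step:
  assumes "length h = m"
  shows "measure_pmf.expectation (step_pmf C b h) (\<lambda>s. P (iterate (s # h))) - P wstar
     \<le> ((a + H * real m) * (norm (iterate h - wstar))\<^sup>2
          - (a + H * real (Suc m))
            * measure_pmf.expectation (step_pmf C b h) (\<lambda>s. (norm (iterate (s # h) - wstar))\<^sup>2)) / 2
        + Var_step n grad eta C b gradP h / (a + H * real (Suc m))"
proof -
  have "eta (Suc m) > 0" "eta (Suc m) \<le> \<gamma>" using step_size_bounds[of "Suc m"] by simp_all
  from sgd_step_expectation[OF finite_set_pmf_step_pmf[OF strategy] expectation_est_inner[OF strategy]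
      _ _ this, where P=P and wstar=wstar and w="iterate h" and H=H]
  show ?thesis
    using strongly_convex smooth assms
    by (simp add: strongly_convex_grad_def smooth_grad_def Var_step_def algebra_simps)
qed

lemma expected_descent:
  "expected (Suc m) (\<lambda>h. P (iterate h)) - P wstar
     \<le> ((a + H * real m) * expected m (\<lambda>h. (norm (iterate h - wstar))\<^sup>2)
          - (a + H * real (Suc m)) * expected (Suc m) (\<lambda>h. (norm (iterate h - wstar))\<^sup>2)) / 2
        + expected m (Var_step n grad eta C b gradP) / (a + H * real (Suc m))"
proof -
  note fin = finite_set_pmf_hist_pmf[OF strategy] finite_set_pmf_step_pmf[OF strategy]
  have next_step: "expected (Suc m) f
      = expected m (\<lambda>h. measure_pmf.expectation (step_pmf C b h) (\<lambda>s. f (s # h)))" for f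
    by (simp add: expectation_bind_pmf_finite fin)
  have "expected (Suc m) (\<lambda>h. P (iterate h)) - P wstar
      = expected m (\<lambda>h. measure_pmf.expectation (step_pmf C b h) (\<lambda>s. P (iterate (s # h))) - P wstar)"
    unfolding next_step by (simp add: integrable_measure_pmf_finite fin del: W.simps)
  also have "\<dots> \<le> expected m (\<lambda>h. ((a + H * real m) * (norm (iterate h - wstar))\<^sup>2
          - (a + H * real (Suc m))
            * measure_pmf.expectation (step_pmf C b h) (\<lambda>s. (norm (iterate (s # h) - wstar))\<^sup>2)) / 2
        + Var_step n grad eta C b gradP h / (a + H * real (Suc m)))"
    by (intro expectation_mono_finite fin expected_descent_step length_hist_pmf)
  also have "\<dots> = ((a + H * real m) * expected m (\<lambda>h. (norm (iterate h - wstar))\<^sup>2)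
          - (a + H * real (Suc m)) * expected (Suc m) (\<lambda>h. (norm (iterate h - wstar))\<^sup>2)) / 2
        + expected m (Var_step n grad eta C b gradP) / (a + H * real (Suc m))"
    unfolding next_step by (simp add: integrable_measure_pmf_finite fin del: W.simps)
  finally show ?thesis .
qed

lemma cumulative_suboptimality_bound:
  assumes "T \<ge> 1"
  shows "(\<Sum>t=1..T. expected t (\<lambda>h. P (iterate h))) - real T * P wstar
     \<le> a / 2 * (norm wstar)\<^sup>2
        + expected T (\<lambda>h. \<Sum>t=1..T. Var_step n grad eta C b gradP (drop (T - (t - 1)) h) / (a + H * real t))"
proof -
  define D where "D m = expected m (\<lambda>h. (norm (iterate h - wstar))\<^sup>2)" for m
  define V where "V m = expected m (Var_step n grad eta C b gradP) / (a + H * real (Suc m))" for m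
  have "(\<Sum>t=1..T. expected t (\<lambda>h. P (iterate h))) - real T * P wstar
      = (\<Sum>m<T. expected (Suc m) (\<lambda>h. P (iterate h)) - P wstar)"
    by (simp add: sum_subtractf sum.atLeast1_atMost_eq del: hist_pmf.simps)
  also have "\<dots> \<le> (a + H * real 0) * D 0 / 2 + (\<Sum>m<T. V m)"
  proof (rule sum_le_telescoping)
    show "0 \<le> (a + H * real T) * D T"
      using step_size_bounds[OF assms] by (simp add: D_def)
  qed (use expected_descent in \<open>simp add: D_def V_def\<close>)
  also have "D 0 = (norm wstar)\<^sup>2" by (simp add: D_def)
  also have "(\<Sum>m<T. V m)
      = expected T (\<lambda>h. \<Sum>t=1..T. Var_step n grad eta C b gradP (drop (T - (t - 1)) h) / (a + H * real t))"
    by (simp add: V_def integrable_measure_pmf_finite finite_set_pmf_hist_pmf[OF strategy]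
        expectation_hist_pmf_drop sum.atLeast1_atMost_eq)
  finally show ?thesis by simp
qed

end

theorem theorem1:
  fixes n :: nat and \<phi> :: "nat \<Rightarrow> 'a::euclidean_space \<Rightarrow> real"
    and grad :: "nat \<Rightarrow> 'a \<Rightarrow> 'a"
    and H \<gamma> a :: real and wstar :: 'a
    and C :: "hist \<Rightarrow> nat set list" and b :: "hist \<Rightarrow> nat list" and T :: nat
  assumes n: "n \<ge> 1"
    and diff: "\<And>s w. s \<in> {1..n} \<Longrightarrow> (\<phi> s has_derivative (\<lambda>v. grad s w \<bullet> v)) (at w)"
    and H: "H \<ge> 0" and \<gamma>: "\<gamma> > 0"
    and sc: "strongly_convex_grad (\<lambda>w. (1 / real n) * (\<Sum>i=1..n. \<phi> i w))
                                  (\<lambda>w. (1 / real n) *\<^sub>R (\<Sum>i=1..n. grad i w)) H"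
    and sm: "smooth_grad (\<lambda>w. (1 / real n) * (\<Sum>i=1..n. \<phi> i w))
                         (\<lambda>w. (1 / real n) *\<^sub>R (\<Sum>i=1..n. grad i w)) \<gamma>"
    and opt: "\<And>w. (1 / real n) * (\<Sum>i=1..n. \<phi> i wstar) \<le> (1 / real n) * (\<Sum>i=1..n. \<phi> i w)"
    and strat: "valid_strategy n C b"
    and a: "a \<ge> 1 / \<gamma> - H"
    and T: "T \<ge> 1"
  shows
   "let P = (\<lambda>w. (1 / real n) * (\<Sum>i=1..n. \<phi> i w));
        gP = (\<lambda>w. (1 / real n) *\<^sub>R (\<Sum>i=1..n. grad i w));
        eta = (\<lambda>t::nat. 1 / (a + H * real t));
        EP = (\<lambda>t. measure_pmf.expectation (hist_pmf C b t) (\<lambda>h. P (W n grad eta C b h)))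
    in Min (EP ` {1..T}) - P wstar \<le> (1 / real T) * (\<Sum>t=1..T. EP t) - P wstar
     \<and> (1 / real T) * (\<Sum>t=1..T. EP t) - P wstar
         \<le> (1 / real T) * (a / 2 * (norm wstar)\<^sup>2
              + measure_pmf.expectation (hist_pmf C b T)
                  (\<lambda>h. \<Sum>t=1..T. Var_step n grad eta C b gP (drop (T - (t - 1)) h) / (a + H * real t)))"
proof -
  define P where "P w = (1 / real n) * (\<Sum>i=1..n. \<phi> i w)" for w
  interpret stratified_sgd n grad P H \<gamma> a C b
    using sc sm H \<gamma> a strat unfolding P_def[abs_def] by unfold_locales
  define EP where "EP t = expected t (\<lambda>h. P (iterate h))" for t
  have "Min (EP ` {1..T}) \<le> (1 / real T) * (\<Sum>t=1..T. EP t)"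
    using Min_image_le_average[of "{1..T}" EP] T by simp
  moreover have "(1 / real T) * ((\<Sum>t=1..T. EP t) - real T * P wstar)
      \<le> (1 / real T) * (a / 2 * (norm wstar)\<^sup>2
          + expected T (\<lambda>h. \<Sum>t=1..T. Var_step n grad eta C b gradP (drop (T - (t - 1)) h) / (a + H * real t)))"
    using cumulative_suboptimality_bound[OF T, of wstar] by (intro mult_left_mono) (simp_all add: EP_def)
  ultimately show ?thesis
    using T by (simp add: EP_def P_def[abs_def] Let_def right_diff_distrib)
qed

end
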